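(* Under the Fuzzy RD Assumption below, $$\int\Delta(z)\,f_{Z(0)\mid X,co}(z\mid c^-)\,dz=\frac{\int\big(\mathbb E(Y\mid X=c^+,Z=z)-\mathbb E(Y\mid X=c^-,Z=z)\big)f_{Z(0)\mid X}(z\mid c^-)\,dz}{\int\big(\mathbb E(T\mid X=c^+,Z=z)-\mathbb E(T\mid X=c^-,Z=z)\big)f_{Z(0)\mid X}(z\mid c^-)\,dz},$$ and, with $g(z)=f_{Z(0)\mid X}(z\mid c^-)+f_{Z(1)\mid X}(z\mid c^+)$, $$\frac{\int\Delta(z)\,p_{co}(z)\,g(z)\,dz}{\int p_{co}(z)\,g(z)\,dz}=\frac{\int\big(\mathbb E(Y\mid X=c^+,Z=z)-\mathbb E(Y\mid X=c^-,Z=z)\big)g(z)\,dz}{\int\big(\mathbb E(T\mid X=c^+,Z=z)-\mathbb E(T\mid X=c^-,Z=z)\big)g(z)\,dz},$$ i.e. the left side is the average of $\Delta$ over compliers at the cutoff whose covariates follow the equal mixture of the left- and right-limit covariate distributions. (Denominators are assumed nonzero.)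
   Context: Fuzzy RD setting: running variable $X$, cutoff $c$, binary treatment $T$, potential outcomes $Y(0),Y(1)$ with $Y=TY(1)+(1-T)Y(0)$, potential covariates with $Z=\mathbf 1(X>c)Z(1)+\mathbf 1(X\le c)Z(0)$. Each individual has a type $\tau\in\{co,at,nt\}$: compliers ($T=\mathbf 1(X>c)$), always-takers ($T=1$), never-takers ($T=0$). Limits $c^\pm$ denote right/left limits in $x$ of the corresponding conditional quantities (assumed to exist). Fuzzy RD Assumption: (1) Independence: for each type $\tau$ and each $z$, $\mathbb P(\tau\mid X=c^+,Z(1)=z)=\mathbb P(\tau\mid X=c^-,Z(0)=z)=:p_\tau(z)$. (2) Monotonicity: $p_{co}(z)+p_{at}(z)+p_{nt}(z)=1$ (no other types). (3) Exclusion: $\mathbb E(Y(1)\mid X=c^+,Z(1)=z,at)=\mathbb E(Y(1)\mid X=c^-,Z(0)=z,at)$ and $\mathbb E(Y(0)\mid X=c^+,Z(1)=z,nt)=\mathbb E(Y(0)\mid X=c^-,Z(0)=z,nt)$. Definitions: $\Delta(z)=\mathbb E(Y(1)\mid X=c^+,Z(1)=z,co)-\mathbb E(Y(0)\mid X=c^-,Z(0)=z,co)$; $f_{Z(0)\mid X}(z\mid c^-)$, $f_{Z(1)\mid X}(z\mid c^+)$ are the limiting conditional densities of $Z(0)$, $Z(1)$ given $X$, and $f_{Z(0)\mid X,co}(z\mid c^-)$ is the limiting conditional density of $Z(0)$ given $X\uparrow c$ and type $co$. *)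

theory Defs
  imports "HOL-Probability.Probability"
begin

text \<open>Compliance types. Monotonicity (no defiers or other types) is built in:
  these are the only three types.\<close>
datatype ctype = Co | At | Nt

text \<open>An individual's unobserved data at a given (X, Z) cell: (type, Y(0), Y(1)).\<close>
type_synonym obs = "ctype \<times> real \<times> real"

definition outcome_space :: "obs measure" where
  "outcome_space = count_space UNIV \<Otimes>\<^sub>M (borel \<Otimes>\<^sub>M borel)"

definition otype :: "obs \<Rightarrow> ctype" where "otype \<omega> = fst \<omega>"
definition pot0 :: "obs \<Rightarrow> real" where "pot0 \<omega> = fst (snd \<omega>)"
definition pot1 :: "obs \<Rightarrow> real" where "pot1 \<omega> = snd (snd \<omega>)"

text \<open>Treatment status of a type on the right (rside = True, X > c) or left
  (rside = False, X \<le> c) of the cutoff.\<close>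
definition treat :: "bool \<Rightarrow> ctype \<Rightarrow> bool" where
  "treat rside \<tau> = (case \<tau> of Co \<Rightarrow> rside | At \<Rightarrow> True | Nt \<Rightarrow> False)"

definition obsY :: "bool \<Rightarrow> obs \<Rightarrow> real" where
  "obsY rside \<omega> = (if treat rside (otype \<omega>) then pot1 \<omega> else pot0 \<omega>)"

definition ptype :: "obs measure \<Rightarrow> ctype \<Rightarrow> real" where
  "ptype M \<tau> = measure M ({\<tau>} \<times> UNIV)"

definition condE0 :: "obs measure \<Rightarrow> ctype \<Rightarrow> real" where
  "condE0 M \<tau> = (\<integral>\<omega>. indicator ({\<tau>} \<times> UNIV) \<omega> * pot0 \<omega> \<partial>M) / ptype M \<tau>"

definition condE1 :: "obs measure \<Rightarrow> ctype \<Rightarrow> real" where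
  "condE1 M \<tau> = (\<integral>\<omega>. indicator ({\<tau>} \<times> UNIV) \<omega> * pot1 \<omega> \<partial>M) / ptype M \<tau>"

definition condEY :: "bool \<Rightarrow> obs measure \<Rightarrow> real" where
  "condEY rside M = (\<integral>\<omega>. obsY rside \<omega> \<partial>M)"

definition condET :: "bool \<Rightarrow> obs measure \<Rightarrow> real" where
  "condET rside M = (\<integral>\<omega>. of_bool (treat rside (otype \<omega>)) \<partial>M)"

text \<open>Kp z: limiting law of (type, Y(0), Y(1)) given X = c^+, Z(1) = z;
  Km z: limiting law given X = c^-, Z(0) = z.\<close>

definition Delta :: "(real \<Rightarrow> obs measure) \<Rightarrow> (real \<Rightarrow> obs measure) \<Rightarrow> real \<Rightarrow> real" where
  "Delta Kp Km z = condE1 (Kp z) Co - condE0 (Km z) Co"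

text \<open>Conditional density of Z(0) given X = c^- and type co (Bayes' rule).\<close>
definition f_co :: "(real \<Rightarrow> obs measure) \<Rightarrow> (real \<Rightarrow> real) \<Rightarrow> real \<Rightarrow> real" where
  "f_co Km f0 z = ptype (Km z) Co * f0 z / (\<integral>u. ptype (Km u) Co * f0 u \<partial>lborel)"

definition is_density :: "(real \<Rightarrow> real) \<Rightarrow> bool" where
  "is_density f \<longleftrightarrow> f \<in> borel_measurable borel \<and> (\<forall>z. 0 \<le> f z)
     \<and> integrable lborel f \<and> (\<integral>z. f z \<partial>lborel) = 1"

end

theory Submission
  imports Defs
begin

text \<open>Conditionally on the covariate value, the observed outcome splits by compliance type:
  the always-taker and never-taker parts have the same mean on both sides of the cutoff
  (independence and exclusion), so the jumps in E(Y | Z = z) and E(T | Z = z) are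
  p_co(z) \<Delta>(z) and p_co(z). Both identities are therefore pointwise in z; integrating them
  against f0 resp. f0 + f1 and normalising gives the two claims.\<close>

definition outcome_law :: "obs measure \<Rightarrow> bool" where
  "outcome_law M \<longleftrightarrow> prob_space M \<and> sets M = sets outcome_space
     \<and> integrable M pot0 \<and> integrable M pot1"

lemma type_event_in_sets_outcome_space: "{\<tau>} \<times> UNIV \<in> sets outcome_space"
  unfolding outcome_space_def
  by (rule pair_measureI)
    (auto simp: space_pair_measure
      intro: sets.top[of "borel \<Otimes>\<^sub>M borel", simplified space_pair_measure, simplified])

lemma space_eq_UNIV_if_sets_outcome_space: "sets M = sets outcome_space \<Longrightarrow> space M = UNIV"
  using sets_eq_imp_space_eq[of M outcome_space]
  by (simp add: outcome_space_def space_pair_measure)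

lemma integral_type_restricted_eq_0_if_ptype_eq_0:
  fixes g :: "obs \<Rightarrow> real"
  assumes "prob_space M" "sets M = sets outcome_space" "integrable M g" "ptype M \<tau> = 0"
  shows "(\<integral>\<omega>. indicator ({\<tau>} \<times> UNIV) \<omega> * g \<omega> \<partial>M) = 0"
proof -
  interpret prob_space M by fact
  have event: "{\<tau>} \<times> UNIV \<in> sets M"
    using assms(2) type_event_in_sets_outcome_space by simp
  with assms(4) have "{\<tau>} \<times> UNIV \<in> null_sets M"
    by (simp add: ptype_def emeasure_eq_measure null_sets_def)
  then have "AE \<omega> in M. indicator ({\<tau>} \<times> UNIV) \<omega> * g \<omega> = 0"
    by (rule AE_not_in[THEN AE_mp]) (simp add: indicator_def)
  moreover have "integrable M (\<lambda>\<omega>. indicator ({\<tau>} \<times> UNIV) \<omega> * g \<omega>)"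
    using integrable_mult_indicator[OF event assms(3)] by simp
  ultimately show ?thesis
    by (subst integral_cong_AE[where g = "\<lambda>_. 0"]) auto
qed

lemma ptype_mult_condE0:
  "outcome_law M \<Longrightarrow> ptype M \<tau> * condE0 M \<tau> = (\<integral>\<omega>. indicator ({\<tau>} \<times> UNIV) \<omega> * pot0 \<omega> \<partial>M)"
  unfolding condE0_def outcome_law_def
  using integral_type_restricted_eq_0_if_ptype_eq_0[of M pot0 \<tau>] by (cases "ptype M \<tau> = 0") auto

lemma ptype_mult_condE1:
  "outcome_law M \<Longrightarrow> ptype M \<tau> * condE1 M \<tau> = (\<integral>\<omega>. indicator ({\<tau>} \<times> UNIV) \<omega> * pot1 \<omega> \<partial>M)"
  unfolding condE1_def outcome_law_def
  using integral_type_restricted_eq_0_if_ptype_eq_0[of M pot1 \<tau>] by (cases "ptype M \<tau> = 0") auto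

lemma condEY_eq_sum_over_types:
  assumes "outcome_law M"
  shows "condEY rside M = ptype M Co * (if rside then condE1 M Co else condE0 M Co)
     + ptype M At * condE1 M At + ptype M Nt * condE0 M Nt"
proof -
  have law: "prob_space M" "sets M = sets outcome_space" "integrable M pot0" "integrable M pot1"
    using assms by (auto simp: outcome_law_def)
  define part where "part \<tau> g = (\<lambda>\<omega>. indicator ({\<tau>} \<times> UNIV) \<omega> * g \<omega>)" for \<tau> and g :: "obs \<Rightarrow> real"
  define potCo where "potCo = (if rside then pot1 else pot0)"
  have integrable_part: "integrable M g \<Longrightarrow> integrable M (part \<tau> g)" for \<tau> g
    using integrable_mult_indicator[of "{\<tau>} \<times> UNIV" M g] law(2) type_event_in_sets_outcome_space
    by (simp add: part_def)
  have "obsY rside = (\<lambda>\<omega>. part Co potCo \<omega> + part At pot1 \<omega> + part Nt pot0 \<omega>)"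
    by (rule ext)
      (auto split: ctype.split
        simp: obsY_def treat_def otype_def indicator_def mem_Times_iff part_def potCo_def)
  moreover have "integrable M potCo"
    using law by (simp add: potCo_def)
  ultimately have "condEY rside M
      = (\<integral>\<omega>. part Co potCo \<omega> \<partial>M) + (\<integral>\<omega>. part At pot1 \<omega> \<partial>M) + (\<integral>\<omega>. part Nt pot0 \<omega> \<partial>M)"
    unfolding condEY_def using law
    by (simp add: integrable_part Bochner_Integration.integral_add)
  also have "\<dots> = ptype M Co * (if rside then condE1 M Co else condE0 M Co)
     + ptype M At * condE1 M At + ptype M Nt * condE0 M Nt"
    using assms by (simp add: part_def potCo_def ptype_mult_condE0 ptype_mult_condE1)
  finally show ?thesis .
qed

lemma condET_True:
  assumes "prob_space M" "sets M = sets outcome_space"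
  shows "condET True M = ptype M Co + ptype M At"
proof -
  interpret prob_space M by fact
  have event: "{\<tau>} \<times> UNIV \<in> sets M" for \<tau>
    using assms(2) type_event_in_sets_outcome_space by simp
  have "of_bool (treat True (otype \<omega>)) = indicator ({Co} \<times> UNIV) \<omega> + (indicator ({At} \<times> UNIV) \<omega> :: real)"
    for \<omega>
    by (cases "fst \<omega>") (auto simp: treat_def otype_def indicator_def mem_Times_iff)
  moreover have "integrable M (indicator ({\<tau>} \<times> UNIV) :: obs \<Rightarrow> real)" for \<tau>
    by (rule integrable_real_indicator[OF event]) (simp add: less_top[symmetric])
  ultimately show ?thesis
    unfolding condET_def using event
    by (simp add: ptype_def space_eq_UNIV_if_sets_outcome_space[OF assms(2)])
qed

lemma condET_False:
  assumes "sets M = sets outcome_space"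
  shows "condET False M = ptype M At"
proof -
  have "of_bool (treat False (otype \<omega>)) = (indicator ({At} \<times> UNIV) \<omega> :: real)" for \<omega>
    by (cases "fst \<omega>") (auto simp: treat_def otype_def indicator_def mem_Times_iff)
  then show ?thesis
    unfolding condET_def by (simp add: ptype_def space_eq_UNIV_if_sets_outcome_space[OF assms])
qed

lemma condET_jump_eq_ptype_Co:
  assumes "outcome_law Mp" "outcome_law Mm" "ptype Mp At = ptype Mm At"
  shows "condET True Mp - condET False Mm = ptype Mp Co"
  using assms by (simp add: outcome_law_def condET_True condET_False)

lemma condEY_jump_eq_ptype_Co_mult:
  assumes "outcome_law Mp" "outcome_law Mm" "\<And>\<tau>. ptype Mp \<tau> = ptype Mm \<tau>"
    and "condE1 Mp At = condE1 Mm At" "condE0 Mp Nt = condE0 Mm Nt"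
  shows "condEY True Mp - condEY False Mm = ptype Mp Co * (condE1 Mp Co - condE0 Mm Co)"
  using assms by (simp add: condEY_eq_sum_over_types algebra_simps)

theorem theorem4:
  fixes Kp Km :: "real \<Rightarrow> obs measure" and f0 f1 :: "real \<Rightarrow> real"
  assumes Kp_prob: "\<And>z. prob_space (Kp z)" and Kp_sets: "\<And>z. sets (Kp z) = sets outcome_space"
      and Km_prob: "\<And>z. prob_space (Km z)" and Km_sets: "\<And>z. sets (Km z) = sets outcome_space"
      and Kp_int: "\<And>z. integrable (Kp z) pot0" "\<And>z. integrable (Kp z) pot1"
      and Km_int: "\<And>z. integrable (Km z) pot0" "\<And>z. integrable (Km z) pot1"
      and dens: "is_density f0" "is_density f1"
      and independence: "\<And>z \<tau>. ptype (Kp z) \<tau> = ptype (Km z) \<tau>"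
      and excl_at: "\<And>z. condE1 (Kp z) At = condE1 (Km z) At"
      and excl_nt: "\<And>z. condE0 (Kp z) Nt = condE0 (Km z) Nt"
      and den1: "(\<integral>z. (condET True (Kp z) - condET False (Km z)) * f0 z \<partial>lborel) \<noteq> 0"
      and den2: "(\<integral>z. (condET True (Kp z) - condET False (Km z)) * (f0 z + f1 z) \<partial>lborel) \<noteq> 0"
  shows "(\<integral>z. Delta Kp Km z * f_co Km f0 z \<partial>lborel)
           = (\<integral>z. (condEY True (Kp z) - condEY False (Km z)) * f0 z \<partial>lborel)
             / (\<integral>z. (condET True (Kp z) - condET False (Km z)) * f0 z \<partial>lborel)
       \<and> (\<integral>z. Delta Kp Km z * ptype (Kp z) Co * (f0 z + f1 z) \<partial>lborel)
           / (\<integral>z. ptype (Kp z) Co * (f0 z + f1 z) \<partial>lborel)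
           = (\<integral>z. (condEY True (Kp z) - condEY False (Km z)) * (f0 z + f1 z) \<partial>lborel)
             / (\<integral>z. (condET True (Kp z) - condET False (Km z)) * (f0 z + f1 z) \<partial>lborel)"
proof -
  define p where "p z = ptype (Kp z) Co" for z
  have laws: "outcome_law (Kp z)" "outcome_law (Km z)" for z
    using assms by (auto simp: outcome_law_def)
  have jumpY: "condEY True (Kp z) - condEY False (Km z) = Delta Kp Km z * p z" for z
    using condEY_jump_eq_ptype_Co_mult[OF laws independence excl_at excl_nt]
    by (simp add: Delta_def p_def mult.commute)
  have jumpT: "condET True (Kp z) - condET False (Km z) = p z" for z
    using condET_jump_eq_ptype_Co[OF laws independence] by (simp add: p_def)
  have "Delta Kp Km z * f_co Km f0 z = Delta Kp Km z * p z * f0 z / (\<integral>u. p u * f0 u \<partial>lborel)" for z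
    by (simp add: f_co_def p_def independence[symmetric])
  then have "(\<integral>z. Delta Kp Km z * f_co Km f0 z \<partial>lborel)
      = (\<integral>z. Delta Kp Km z * p z * f0 z \<partial>lborel) / (\<integral>z. p z * f0 z \<partial>lborel)"
    by (simp only: integral_divide_zero)
  then show ?thesis
    unfolding jumpY jumpT p_def[symmetric] by simp
qed

end
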